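(* Let $\mathbf{s}(\lambda)$ and $\mathbf{v}(i)$ be $N$-vectors with entries $s_j(\lambda) = S(e_j, e_j; \lambda)$ and $v_j(i) = \delta_{ij}$, and let $\bar{\mathbf{s}}(\lambda) = (\mathbf{s}(\lambda), \mathbf{s}(\lambda))$ and $\bar{\mathbf{v}}(i) = (\mathbf{v}(i), \mathbf{v}(i))$ be the corresponding $2N$-vectors. Then \[ G_i(\lambda, z) = S(e_i, e_i; \lambda) + \sum_{d = 1}^{\infty} \bar{\mathbf{v}}^{T}(i)\, \mathbf{K}(\lambda, z)^d\, \bar{\mathbf{s}}(\lambda). \]
   Context: Fix $N \geq 3$. Let $\mathcal{G}_N$ be the groupoid with objects $\{1,\dots,N\}$, generated by arrows $A_{i,j}^{(k)}$ ($i \neq j$, $k \in \{-1,1\}$) with source $i$ and target $j$, subject to the relations $A_{i,j}^{(k)} A_{j,\ell}^{(k)} = A_{i,\ell}^{(k)}$ (with $A_{i,i}^{(k)} := e_i$, the unit at $i$). Every arrow has a unique reduced representation, either empty or an alternating product $A_{i_1,i_2}^{(k)} A_{i_2,i_3}^{(-k)} \cdots$ with consecutive indices distinct. A metric $|\cdot|_{\mathcal{M}}$ generated by the generators assigns a nonnegative value to each generator and is additive over the reduced representation, with $|e_i|_{\mathcal{M}} = 0$. Let $(W_n)_{n \ge 0}$ be a Markov chain on the arrows with $P(W_{n+1} = y \mid W_n = x) = p_{i,j}^{(k)}$ if $x^{-1}y = A_{i,j}^{(k)}$ ($i \neq j$) and $0$ otherwise, where all $p_{i,j}^{(k)} \in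 (0,1)$ and $\sum_{j,k} p_{i,j}^{(k)} = 1$ for each $i$. Write $P_x, E_x$ for the chain started at $W_0 = x$. For arrows $x, y$ define $S(x, y; \lambda) = \sum_{n\ge 0} P_x(W_n = y)\lambda^n$, let $T(0,y) = \inf\{k \ge 0 : W_k = W_0 y\}$, and let $R_{i,j}^{(k)}(\lambda) = E_{e_i}[\lambda^{T(0, A_{i,j}^{(k)})}]$. Define $G_i(\lambda, z) = E_{e_i}\big[\sum_{n\ge 0} z^{|W_n|_{\mathcal{M}}} \lambda^n\big]$. Let $\mathbf{B}(k; \lambda, z)$ be the $N \times N$ matrix with entries $\mathbf{B}_{i,j}(k; \lambda, z) = (1 - \delta_{i,j})\, z^{|A_{i,j}^{(k)}|_{\mathcal{M}}} R_{i,j}^{(k)}(\lambda)$, and let $\mathbf{K}(\lambda, z)$ be the $2N \times 2N$ block matrix $\begin{pmatrix} \mathbf{0} & \mathbf{B}(1; \lambda, z) \\ \mathbf{B}(-1; \lambda, z) & \mathbf{0} \end{pmatrix}$. *)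

theory Defs
  imports Complex_Main "HOL-Library.Extended_Nonnegative_Real"
begin

text \<open>Arrows of the groupoid G_N in reduced form.  An arrow is a pair (s, ws):
  s is the source object, and ws = [(k1,i2),(k2,i3),...] lists the letters of the
  reduced word A_{s,i2}^{(k1)} A_{i2,i3}^{(k2)} ..., where the signs alternate and
  consecutive objects are distinct.\<close>

type_synonym arrow = "nat \<times> (int \<times> nat) list"

definition unit_arr :: "nat \<Rightarrow> arrow" where
  "unit_arr i = (i, [])"

definition gen_arr :: "nat \<Rightarrow> nat \<Rightarrow> int \<Rightarrow> arrow" where
  "gen_arr i j k = (i, [(k, j)])"

definition tgt :: "arrow \<Rightarrow> nat" where
  "tgt x = (if snd x = [] then fst x else snd (last (snd x)))"

text \<open>Right multiplication of an arrow x by the generator A_{tgt x, j}^{(k)},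
  computed on reduced words using A_{i,j}^{(k)} A_{j,l}^{(k)} = A_{i,l}^{(k)}.\<close>

definition mult_gen :: "arrow \<Rightarrow> nat \<Rightarrow> int \<Rightarrow> arrow" where
  "mult_gen x j k =
    (let s = fst x; ws = snd x in
     if ws = [] then (s, [(k, j)])
     else if fst (last ws) \<noteq> k then (s, ws @ [(k, j)])
     else (let prev = tgt (s, butlast ws) in
           if j = prev then (s, butlast ws) else (s, butlast ws @ [(k, j)])))"

text \<open>Metric generated by the generators: additive over the reduced word.
  M i j k = |A_{i,j}^{(k)}|_M.\<close>

fun wlen :: "(nat \<Rightarrow> nat \<Rightarrow> int \<Rightarrow> real) \<Rightarrow> nat \<Rightarrow> (int \<times> nat) list \<Rightarrow> real" where
  "wlen M s [] = 0"
| "wlen M s ((k, j) # ws) = M s j k + wlen M j ws"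

definition arr_norm :: "(nat \<Rightarrow> nat \<Rightarrow> int \<Rightarrow> real) \<Rightarrow> arrow \<Rightarrow> real" where
  "arr_norm M x = wlen M (fst x) (snd x)"

definition steps :: "nat \<Rightarrow> nat \<Rightarrow> (nat \<times> int) set" where
  "steps N i = ({1..N} - {i}) \<times> {-1, 1}"

primrec Ex :: "nat \<Rightarrow> (nat \<Rightarrow> nat \<Rightarrow> int \<Rightarrow> real) \<Rightarrow> nat \<Rightarrow> (arrow \<Rightarrow> real) \<Rightarrow> arrow \<Rightarrow> real" where
  "Ex N p 0 f x = f x"
| "Ex N p (Suc n) f x =
     (\<Sum>(j, k)\<in>steps N (tgt x). p (tgt x) j k * Ex N p n f (mult_gen x j k))"

definition Pn :: "nat \<Rightarrow> (nat \<Rightarrow> nat \<Rightarrow> int \<Rightarrow> real) \<Rightarrow> nat \<Rightarrow> arrow \<Rightarrow> arrow \<Rightarrow> real" where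
  "Pn N p n x y = Ex N p n (\<lambda>w. if w = y then 1 else 0) x"

text \<open>P_x(T = n), where T is the first time k >= 0 with W_k = y.\<close>

primrec Fn :: "nat \<Rightarrow> (nat \<Rightarrow> nat \<Rightarrow> int \<Rightarrow> real) \<Rightarrow> nat \<Rightarrow> arrow \<Rightarrow> arrow \<Rightarrow> real" where
  "Fn N p 0 x y = (if x = y then 1 else 0)"
| "Fn N p (Suc n) x y =
     (if x = y then 0
      else (\<Sum>(j, k)\<in>steps N (tgt x). p (tgt x) j k * Fn N p n (mult_gen x j k) y))"

definition Sgf :: "nat \<Rightarrow> (nat \<Rightarrow> nat \<Rightarrow> int \<Rightarrow> real) \<Rightarrow> arrow \<Rightarrow> arrow \<Rightarrow> real \<Rightarrow> ennreal" where
  "Sgf N p x y lam = (\<Sum>n. ennreal (Pn N p n x y) * ennreal lam ^ n)"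

text \<open>R_{i,j}^{(k)}(lam) = E_{e_i}[lam^T ; T < \<infinity>] with T = T(0, A_{i,j}^{(k)}).\<close>

definition Rgf :: "nat \<Rightarrow> (nat \<Rightarrow> nat \<Rightarrow> int \<Rightarrow> real) \<Rightarrow> nat \<Rightarrow> nat \<Rightarrow> int \<Rightarrow> real \<Rightarrow> ennreal" where
  "Rgf N p i j k lam =
     (\<Sum>n. ennreal (Fn N p n (unit_arr i) (gen_arr i j k)) * ennreal lam ^ n)"

definition Ggf :: "nat \<Rightarrow> (nat \<Rightarrow> nat \<Rightarrow> int \<Rightarrow> real) \<Rightarrow> (nat \<Rightarrow> nat \<Rightarrow> int \<Rightarrow> real)
    \<Rightarrow> nat \<Rightarrow> real \<Rightarrow> real \<Rightarrow> ennreal" where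
  "Ggf N p M i lam z =
     (\<Sum>n. ennreal (Ex N p n (\<lambda>w. z powr arr_norm M w) (unit_arr i)) * ennreal lam ^ n)"

definition Bmat :: "nat \<Rightarrow> (nat \<Rightarrow> nat \<Rightarrow> int \<Rightarrow> real) \<Rightarrow> (nat \<Rightarrow> nat \<Rightarrow> int \<Rightarrow> real)
    \<Rightarrow> int \<Rightarrow> real \<Rightarrow> real \<Rightarrow> nat \<Rightarrow> nat \<Rightarrow> ennreal" where
  "Bmat N p M k lam z i j =
     (if i = j then 0 else ennreal (z powr M i j k) * Rgf N p i j k lam)"

definition Kmat :: "nat \<Rightarrow> (nat \<Rightarrow> nat \<Rightarrow> int \<Rightarrow> real) \<Rightarrow> (nat \<Rightarrow> nat \<Rightarrow> int \<Rightarrow> real)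
    \<Rightarrow> real \<Rightarrow> real \<Rightarrow> nat \<Rightarrow> nat \<Rightarrow> ennreal" where
  "Kmat N p M lam z a b =
     (if a \<le> N \<and> N < b then Bmat N p M 1 lam z a (b - N)
      else if N < a \<and> b \<le> N then Bmat N p M (-1) lam z (a - N) b
      else 0)"

primrec mat_pow :: "nat \<Rightarrow> (nat \<Rightarrow> nat \<Rightarrow> ennreal) \<Rightarrow> nat \<Rightarrow> nat \<Rightarrow> nat \<Rightarrow> ennreal" where
  "mat_pow m A 0 a b = (if a = b then 1 else 0)"
| "mat_pow m A (Suc d) a b = (\<Sum>c\<in>{1..m}. mat_pow m A d a c * A c b)"

definition vbar :: "nat \<Rightarrow> nat \<Rightarrow> nat \<Rightarrow> ennreal" where
  "vbar N i a = (if a = i \<or> a = i + N then 1 else 0)"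

definition sbar :: "nat \<Rightarrow> (nat \<Rightarrow> nat \<Rightarrow> int \<Rightarrow> real) \<Rightarrow> real \<Rightarrow> nat \<Rightarrow> ennreal" where
  "sbar N p lam b =
     (let j = (if b \<le> N then b else b - N) in Sgf N p (unit_arr j) (unit_arr j) lam)"

end

theory Submission
  imports Defs "HOL-Analysis.Nonnegative_Lebesgue_Integration"
begin

text \<open>Group the terms of \<open>G_i\<close> by the reduced word \<open>w\<close> occupied by the chain:
  \<open>G_i = \<Sum>_w z^|w| S(e_i, w)\<close>. A step of the chain only changes the last letter of the reduced
  word, so \<open>w = A_{i,j}^(k) w'\<close> is reached only after a first passage through \<open>A_{i,j}^(k)\<close>.
  Since the chain commutes with left multiplication by generators, decomposing at that passage
  gives \<open>S(e_i, w) = R_{i,j}^(k) S(e_j, w')\<close>. Hence the sums over words of length \<open>d\<close>, split by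
  source and by the sign of the first letter, obey the recursion encoded by \<open>K\<close> and form the
  vector \<open>K^d sbar\<close>.

  All series have nonnegative terms and are taken in \<open>[0, \<infinity>]\<close>, so they can be rearranged
  freely.\<close>

section \<open>Series with nonnegative terms\<close>

lemma suminf_commute_ennreal:
  fixes f :: "nat \<Rightarrow> nat \<Rightarrow> ennreal"
  shows "(\<Sum>i. \<Sum>j. f i j) = (\<Sum>j. \<Sum>i. f i j)"
proof -
  have "(\<Sum>i. \<Sum>j. f i j) = (\<Sum>i. \<integral>\<^sup>+j. f i j \<partial>count_space UNIV)"
    by (simp add: nn_integral_count_space_nat)
  also have "\<dots> = (\<integral>\<^sup>+j. (\<Sum>i. f i j) \<partial>count_space UNIV)"
    by (rule nn_integral_suminf[symmetric]) auto
  also have "\<dots> = (\<Sum>j. \<Sum>i. f i j)"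
    by (simp add: nn_integral_count_space_nat)
  finally show ?thesis .
qed

lemma ennreal_power_series_Cauchy_product:
  fixes a b :: "nat \<Rightarrow> ennreal" and x :: ennreal
  shows "(\<Sum>n. (\<Sum>m\<le>n. a m * b (n - m)) * x ^ n) = (\<Sum>n. a n * x ^ n) * (\<Sum>n. b n * x ^ n)"
proof -
  have "(\<Sum>n. (\<Sum>m\<le>n. a m * b (n - m)) * x ^ n)
      = (\<Sum>n. \<Sum>m. if m \<le> n then a m * b (n - m) * x ^ n else 0)"
  proof (rule suminf_cong)
    fix n
    show "(\<Sum>m\<le>n. a m * b (n - m)) * x ^ n = (\<Sum>m. if m \<le> n then a m * b (n - m) * x ^ n else 0)"
      by (subst suminf_finite[of "{..n}"]) (auto simp: sum_distrib_right)
  qed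
  also have "\<dots> = (\<Sum>m. \<Sum>n. if m \<le> n then a m * b (n - m) * x ^ n else 0)"
    by (rule suminf_commute_ennreal)
  also have "\<dots> = (\<Sum>m. \<Sum>l. a m * b l * x ^ (l + m))"
  proof (rule suminf_cong)
    fix m
    show "(\<Sum>n. if m \<le> n then a m * b (n - m) * x ^ n else 0) = (\<Sum>l. a m * b l * x ^ (l + m))"
      using suminf_offset[OF summableI, of "\<lambda>n. if m \<le> n then a m * b (n - m) * x ^ n else 0" m]
      by simp
  qed
  also have "\<dots> = (\<Sum>m. a m * x ^ m * (\<Sum>l. b l * x ^ l))"
    by (simp add: power_add mult_ac flip: ennreal_suminf_cmult)
  finally show ?thesis
    by simp
qed

section \<open>Reduced words\<close>

fun reduced_word :: "nat \<Rightarrow> (int \<times> nat) list \<Rightarrow> bool" where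
  "reduced_word s [] \<longleftrightarrow> True"
| "reduced_word s ((k, j) # ws) \<longleftrightarrow> j \<noteq> s \<and> reduced_word j ws \<and> (ws = [] \<or> fst (hd ws) \<noteq> k)"

definition valid_word :: "nat \<Rightarrow> nat \<Rightarrow> (int \<times> nat) list \<Rightarrow> bool" where
  "valid_word N s ws \<longleftrightarrow> reduced_word s ws \<and> set ws \<subseteq> {-1, 1} \<times> {1..N}"

definition valid_arrow :: "nat \<Rightarrow> arrow \<Rightarrow> bool" where
  "valid_arrow N x \<longleftrightarrow> fst x \<in> {1..N} \<and> valid_word N (fst x) (snd x)"

lemma tgt_Nil [simp]: "tgt (s, []) = s"
  by (simp add: tgt_def)

lemma tgt_snoc [simp]: "tgt (s, ws @ [l]) = snd l"
  by (simp add: tgt_def)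

lemma tgt_Cons: "tgt (s, l # ws) = tgt (snd l, ws)"
  by (cases ws rule: rev_cases) (auto simp: tgt_def)

lemma tgt_valid_arrow: "valid_arrow N x \<Longrightarrow> tgt x \<in> {1..N}"
  by (cases "snd x" rule: rev_cases) (auto simp: valid_arrow_def valid_word_def tgt_def)

lemma reduced_word_snoc:
  "reduced_word s (ws @ [(k, j)]) \<longleftrightarrow>
     reduced_word s ws \<and> j \<noteq> tgt (s, ws) \<and> (ws = [] \<or> fst (last ws) \<noteq> k)"
proof (induction ws arbitrary: s)
  case Nil
  then show ?case by simp
next
  case (Cons l ws)
  then show ?case
    by (cases l; cases ws) (auto simp: tgt_Cons)
qed

lemma steps_iff: "(j, k) \<in> steps N a \<longleftrightarrow> j \<in> {1..N} \<and> j \<noteq> a \<and> k \<in> {-1, 1}"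
  by (auto simp: steps_def)

lemma finite_steps [simp]: "finite (steps N a)"
  by (simp add: steps_def)

lemma mult_gen_Nil [simp]: "mult_gen (s, []) j k = (s, [(k, j)])"
  by (simp add: mult_gen_def)

lemma mult_gen_snoc:
  "mult_gen (s, ws @ [(k', t)]) j k =
     (if k' \<noteq> k then (s, ws @ [(k', t), (k, j)])
      else if j = tgt (s, ws) then (s, ws) else (s, ws @ [(k, j)]))"
  by (simp add: mult_gen_def Let_def)

lemma fst_mult_gen [simp]: "fst (mult_gen x j k) = fst x"
  by (simp add: mult_gen_def Let_def)

lemma snd_mult_gen_cases:
  obtains "snd x = []" "snd (mult_gen x j k) = [(k, j)]"
  | ws l where "snd x = ws @ [l]" "snd (mult_gen x j k) \<in> {ws @ [l, (k, j)], ws, ws @ [(k, j)]}"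
proof (cases x)
  case (Pair s ws)
  then show ?thesis
    using that by (cases ws rule: rev_cases) (auto simp: mult_gen_snoc split: prod.splits)
qed

lemma length_mult_gen: "length (snd (mult_gen x j k)) \<le> Suc (length (snd x))"
  by (rule snd_mult_gen_cases[where x = x and j = j and k = k]) auto

lemma set_mult_gen: "set (snd (mult_gen x j k)) \<subseteq> insert (k, j) (set (snd x))"
  by (rule snd_mult_gen_cases[where x = x and j = j and k = k]) auto

lemma hd_mult_gen:
  assumes "snd (mult_gen x j' k') = (k, j) # l # ws"
  shows "\<exists>ws'. snd x = (k, j) # ws'"
  using assms
  by (cases rule: snd_mult_gen_cases[where x = x and j = j' and k = k']) (auto simp: Cons_eq_append_conv)

lemma reduced_word_mult_gen:
  assumes "reduced_word (fst x) (snd x)" "j \<noteq> tgt x"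
  shows "reduced_word (fst x) (snd (mult_gen x j k))"
proof -
  obtain s ws where x: "x = (s, ws)"
    by (cases x)
  show ?thesis
  proof (cases ws rule: rev_cases)
    case Nil
    then show ?thesis
      using assms by (simp add: x)
  next
    case (snoc ws0 l)
    obtain k' t where l: "l = (k', t)"
      by (cases l)
    have "reduced_word s ws0" "t \<noteq> tgt (s, ws0)" "ws0 = [] \<or> fst (last ws0) \<noteq> k'"
      using assms by (auto simp: x snoc l reduced_word_snoc)
    then show ?thesis
      using assms
      by (auto simp: x snoc l mult_gen_snoc reduced_word_snoc
          reduced_word_snoc[where ws = "ws0 @ [(k', t)]", simplified])
  qed
qed

lemma valid_arrow_mult_gen:
  assumes "valid_arrow N x" "(j, k) \<in> steps N (tgt x)"
  shows "valid_arrow N (mult_gen x j k)"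
  using assms reduced_word_mult_gen[of x j k] set_mult_gen[of x j k]
  by (auto simp: valid_arrow_def valid_word_def steps_iff)

section \<open>Left multiplication by a generator\<close>

text \<open>\<open>gen_mult s t k x\<close> is the reduced form of \<open>A_{s,t}^(k) x\<close>, for an arrow \<open>x\<close> with source \<open>t\<close>.\<close>

definition gen_mult :: "nat \<Rightarrow> nat \<Rightarrow> int \<Rightarrow> arrow \<Rightarrow> arrow" where
  "gen_mult s t k x =
     (case snd x of
        [] \<Rightarrow> (s, [(k, t)])
      | (k', j) # ws \<Rightarrow>
          if k' \<noteq> k then (s, (k, t) # snd x) else if j = s then (s, ws) else (s, (k, j) # ws))"

lemma fst_gen_mult [simp]: "fst (gen_mult s t k x) = s"
  by (auto simp: gen_mult_def split: list.splits)

lemma gen_mult_Nil [simp]: "gen_mult s t k (t, []) = (s, [(k, t)])"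
  by (simp add: gen_mult_def)

lemma gen_mult_Cons:
  "gen_mult s t k (t, (k', j) # ws) =
     (if k' \<noteq> k then (s, (k, t) # (k', j) # ws) else if j = s then (s, ws) else (s, (k, j) # ws))"
  by (simp add: gen_mult_def)

lemma gen_mult_snoc:
  "ws \<noteq> [] \<Longrightarrow> gen_mult s t k (t, ws @ [l]) = (s, snd (gen_mult s t k (t, ws)) @ [l])"
  by (cases ws) (auto simp: gen_mult_Cons)

context
  fixes s t :: nat
  assumes st: "s \<noteq> t"
begin

lemma gen_mult_inverse:
  assumes x: "fst x = t" "reduced_word t (snd x)"
  shows "gen_mult t s k (gen_mult s t k x) = x"
proof -
  obtain ws where x_eq: "x = (t, ws)"
    using x by (cases x) auto
  show ?thesis
    using st x by (cases ws rule: remdups_adj.cases) (auto simp: x_eq gen_mult_Cons gen_mult_def)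
qed

lemma tgt_gen_mult:
  assumes x: "fst x = t" "reduced_word t (snd x)"
  shows "tgt (gen_mult s t k x) = tgt x"
proof -
  obtain ws where x_eq: "x = (t, ws)"
    using x by (cases x) auto
  show ?thesis
    using st x by (cases ws rule: remdups_adj.cases) (auto simp: x_eq gen_mult_Cons tgt_Cons)
qed

lemma mult_gen_gen_mult:
  assumes x: "fst x = t" "reduced_word t (snd x)" and "j \<noteq> tgt x"
  shows "mult_gen (gen_mult s t k0 x) j k = gen_mult s t k0 (mult_gen x j k)"
proof -
  obtain ws where x_eq: "x = (t, ws)"
    using x by (cases x) auto
  show ?thesis
  proof (cases ws rule: rev_cases)
    case Nil
    then show ?thesis
      using st assms by (auto simp: x_eq gen_mult_Cons mult_gen_snoc[where ws = "[]", simplified])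
  next
    case (snoc ws0 l)
    obtain k' a where l: "l = (k', a)"
      by (cases l)
    show ?thesis
    proof (cases "ws0 = []")
      case True
      then show ?thesis
        using st assms by (auto simp: x_eq snoc l gen_mult_Cons mult_gen_def Let_def tgt_def)
    next
      case False
      have "reduced_word t ws0"
        using x by (simp add: x_eq snoc l reduced_word_snoc)
      then have "tgt (gen_mult s t k0 (t, ws0)) = tgt (t, ws0)"
        by (intro tgt_gen_mult) auto
      then have tgt_eq: "tgt (s, snd (gen_mult s t k0 (t, ws0))) = tgt (t, ws0)"
        by (metis fst_gen_mult prod.collapse)
      have pair: "(s, snd (gen_mult s t k0 (t, ws0))) = gen_mult s t k0 (t, ws0)"
        by (metis fst_gen_mult prod.collapse)
      show ?thesis
        using False tgt_eq
        by (simp add: x_eq snoc l gen_mult_snoc mult_gen_snoc pair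
            gen_mult_snoc[where ws = "ws0 @ [(k', a)]", simplified])
    qed
  qed
qed

lemma gen_mult_eq_iff:
  assumes "fst x = t" "reduced_word t (snd x)" "fst y = t" "reduced_word t (snd y)"
  shows "gen_mult s t k x = gen_mult s t k y \<longleftrightarrow> x = y"
  using gen_mult_inverse[of x k] gen_mult_inverse[of y k] assms by metis

end

section \<open>Translation invariance and first passages\<close>

lemma Pn_0 [simp]: "Pn N p 0 x y = (if x = y then 1 else 0)"
  by (simp add: Pn_def)

lemma Pn_Suc: "Pn N p (Suc n) x y = (\<Sum>(j, k)\<in>steps N (tgt x). p (tgt x) j k * Pn N p n (mult_gen x j k) y)"
  by (simp add: Pn_def)

context
  fixes N :: nat and p :: "nat \<Rightarrow> nat \<Rightarrow> int \<Rightarrow> real"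
  assumes p_nonneg: "\<And>a j k. a \<in> {1..N} \<Longrightarrow> (j, k) \<in> steps N a \<Longrightarrow> 0 \<le> p a j k"
begin

lemma Pn_nonneg: "valid_arrow N x \<Longrightarrow> 0 \<le> Pn N p n x y"
proof (induction n arbitrary: x)
  case (Suc n)
  have "0 \<le> p (tgt x) j k * Pn N p n (mult_gen x j k) y" if "(j, k) \<in> steps N (tgt x)" for j k
    using that Suc p_nonneg[OF tgt_valid_arrow] valid_arrow_mult_gen by simp
  then show ?case
    by (auto simp: Pn_Suc intro!: sum_nonneg)
qed simp

lemma Fn_nonneg: "valid_arrow N x \<Longrightarrow> 0 \<le> Fn N p n x y"
proof (induction n arbitrary: x)
  case (Suc n)
  have "0 \<le> p (tgt x) j k * Fn N p n (mult_gen x j k) y" if "(j, k) \<in> steps N (tgt x)" for j k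
    using that Suc p_nonneg[OF tgt_valid_arrow] valid_arrow_mult_gen by simp
  then show ?case
    by (auto intro!: sum_nonneg)
qed simp

end

lemma Pn_gen_mult:
  assumes st: "s \<noteq> t" and "fst x = t" "reduced_word t (snd x)" and y: "fst y = t" "reduced_word t (snd y)"
  shows "Pn N p n (gen_mult s t k x) (gen_mult s t k y) = Pn N p n x y"
  using assms(2,3)
proof (induction n arbitrary: x)
  case 0
  then show ?case
    using gen_mult_eq_iff[OF st _ _ y] by simp
next
  case (Suc n)
  have "Pn N p n (mult_gen (gen_mult s t k x) j k') (gen_mult s t k y) = Pn N p n (mult_gen x j k') y"
    if "(j, k') \<in> steps N (tgt x)" for j k'
  proof -
    have "j \<noteq> tgt x"
      using that by (simp add: steps_iff)
    then show ?thesis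
      using Suc reduced_word_mult_gen[of x j k'] by (simp add: mult_gen_gen_mult[OF st])
  qed
  then show ?case
    by (auto simp: Pn_Suc tgt_gen_mult[OF st Suc.prems] intro!: sum.cong)
qed

text \<open>The chain can leave \<open>C\<close> only through \<open>y'\<close>, so it visits \<open>y'\<close> before reaching \<open>y\<close>.\<close>

lemma Pn_first_passage:
  assumes "y' \<in> C"
    and "\<And>x j k. x \<in> C \<Longrightarrow> x \<noteq> y' \<Longrightarrow> (j, k) \<in> steps N (tgt x) \<Longrightarrow> mult_gen x j k \<in> C"
    and "y \<in> C \<Longrightarrow> y = y'"
    and "x \<in> C"
  shows "Pn N p n x y = (\<Sum>m\<le>n. Fn N p m x y' * Pn N p (n - m) y' y)"
  using assms(4)
proof (induction n arbitrary: x)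
  case 0
  then show ?case
    using assms(3) by auto
next
  case (Suc n)
  have shift: "(\<Sum>m\<le>Suc n. Fn N p m x y' * Pn N p (Suc n - m) y' y)
      = Fn N p 0 x y' * Pn N p (Suc n) y' y + (\<Sum>m\<le>n. Fn N p (Suc m) x y' * Pn N p (n - m) y' y)"
    by (subst sum.atMost_Suc_shift) simp
  show ?case
  proof (cases "x = y'")
    case True
    then show ?thesis
      unfolding shift by simp
  next
    case False
    have "(\<Sum>m\<le>n. Fn N p (Suc m) x y' * Pn N p (n - m) y' y)
        = (\<Sum>(j, k)\<in>steps N (tgt x). p (tgt x) j k * (\<Sum>m\<le>n. Fn N p m (mult_gen x j k) y' * Pn N p (n - m) y' y))"
      using False
      by (simp add: sum_distrib_left sum_distrib_right case_prod_beta mult.assoc sum.swap[of _ "{..n}"])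
    also have "\<dots> = Pn N p (Suc n) x y"
    proof -
      have "(\<Sum>m\<le>n. Fn N p m (mult_gen x j k) y' * Pn N p (n - m) y' y) = Pn N p n (mult_gen x j k) y"
        if "(j, k) \<in> steps N (tgt x)" for j k
        using Suc.IH[OF assms(2)[OF Suc.prems False that]] by simp
      then show ?thesis
        by (auto simp: Pn_Suc intro!: sum.cong)
    qed
    finally show ?thesis
      unfolding shift using False by simp
  qed
qed

lemma Sgf_unit_Cons:
  assumes p_nonneg: "\<And>a j k. a \<in> {1..N} \<Longrightarrow> (j, k) \<in> steps N a \<Longrightarrow> 0 \<le> p a j k"
    and t: "t \<in> {1..N}" and jk: "(j, k) \<in> steps N t"
    and w: "reduced_word j w" "w = [] \<or> fst (hd w) \<noteq> k"
  shows "Sgf N p (unit_arr t) (t, (k, j) # w) lam = Rgf N p t j k lam * Sgf N p (unit_arr j) (j, w) lam"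
proof -
  let ?y = "(t, (k, j) # w)" and ?g = "gen_arr t j k"
  \<comment> \<open>A step only changes the last letter, so words beginning with \<open>(k, j)\<close> and
    longer than one letter are entered only from \<open>gen_arr t j k\<close>.\<close>
  define C where "C = {x. fst x = t \<and> (\<nexists>l ws. snd x = (k, j) # l # ws)}"
  have first_passage:
    "Pn N p n (unit_arr t) ?y = (\<Sum>m\<le>n. Fn N p m (unit_arr t) ?g * Pn N p (n - m) ?g ?y)" for n
  proof (rule Pn_first_passage[where C = C])
    show "mult_gen x j' k' \<in> C" if "x \<in> C" "x \<noteq> ?g" for x j' k'
    proof -
      have "snd x \<noteq> [(k, j)]"
        using that by (cases x) (auto simp: C_def gen_arr_def)
      moreover have "snd x \<noteq> (k, j) # l # ws" for l ws
        using that by (cases l) (simp add: C_def)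
      ultimately have "\<nexists>ws'. snd x = (k, j) # ws'"
        by (metis neq_Nil_conv)
      then show ?thesis
        using that hd_mult_gen[of x j' k' k j] by (auto simp: C_def)
    qed
    show "?y = ?g" if "?y \<in> C"
      using that by (cases w) (auto simp: C_def gen_arr_def)
  qed (auto simp: C_def gen_arr_def unit_arr_def)
  have valid: "valid_arrow N (unit_arr t)" "valid_arrow N ?g"
    using t jk by (auto simp: valid_arrow_def valid_word_def unit_arr_def gen_arr_def steps_iff)
  have F: "0 \<le> Fn N p m (unit_arr t) ?g" for m
    by (rule Fn_nonneg[OF p_nonneg valid(1)])
  have P: "0 \<le> Pn N p m ?g ?y" for m
    by (rule Pn_nonneg[OF p_nonneg valid(2)])
  have "ennreal (Pn N p n (unit_arr t) ?y)
      = (\<Sum>m\<le>n. ennreal (Fn N p m (unit_arr t) ?g) * ennreal (Pn N p (n - m) ?g ?y))" for n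
    unfolding first_passage
    by (subst sum_ennreal[symmetric]) (auto simp: F P ennreal_mult)
  then have "Sgf N p (unit_arr t) ?y lam
      = (\<Sum>n. (\<Sum>m\<le>n. ennreal (Fn N p m (unit_arr t) ?g) * ennreal (Pn N p (n - m) ?g ?y)) * ennreal lam ^ n)"
    by (simp add: Sgf_def)
  also have "\<dots> = Rgf N p t j k lam * Sgf N p ?g ?y lam"
    unfolding Rgf_def Sgf_def by (rule ennreal_power_series_Cauchy_product)
  also have "Sgf N p ?g ?y lam = Sgf N p (unit_arr j) (j, w) lam"
  proof -
    have "j \<noteq> t"
      using jk by (simp add: steps_iff)
    then have "Pn N p n ?g ?y = Pn N p n (unit_arr j) (j, w)" for n
      using Pn_gen_mult[where s = t and t = j and x = "(j, [])" and y = "(j, w)" and k = k] w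
      by (cases w) (auto simp: gen_arr_def unit_arr_def gen_mult_Cons)
    then show ?thesis
      by (simp add: Sgf_def)
  qed
  finally show ?thesis .
qed

section \<open>Decomposition by the reached word\<close>

definition words :: "nat \<Rightarrow> nat \<Rightarrow> nat \<Rightarrow> (int \<times> nat) list set" where
  "words N t d = {w. length w = d \<and> valid_word N t w}"

lemma finite_words: "finite (words N t d)"
  by (rule finite_subset[OF _ finite_lists_length_eq[of "{-1, 1} \<times> {1..N}" d]])
    (auto simp: words_def valid_word_def)

lemma words_0 [simp]: "words N t 0 = {[]}"
  by (auto simp: words_def valid_word_def)

primrec reach :: "nat \<Rightarrow> nat \<Rightarrow> arrow \<Rightarrow> arrow set" where
  "reach N 0 x = {x}"
| "reach N (Suc n) x = (\<Union>(j, k)\<in>steps N (tgt x). reach N n (mult_gen x j k))"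

lemma finite_reach: "finite (reach N n x)"
proof (induction n arbitrary: x)
  case (Suc n)
  then show ?case
    by (simp split: prod.split)
qed simp

lemma Pn_outside_reach: "y \<notin> reach N n x \<Longrightarrow> Pn N p n x y = 0"
proof (induction n arbitrary: x)
  case (Suc n)
  have "Pn N p n (mult_gen x j k) y = 0" if "(j, k) \<in> steps N (tgt x)" for j k
    using that Suc by (intro Suc.IH) auto
  then show ?case
    by (auto simp: Pn_Suc intro!: sum.neutral)
qed simp

lemma reach_valid_arrow:
  "y \<in> reach N n x \<Longrightarrow> valid_arrow N x \<Longrightarrow> valid_arrow N y \<and> fst y = fst x"
proof (induction n arbitrary: x)
  case (Suc n)
  then obtain j k where "(j, k) \<in> steps N (tgt x)" "y \<in> reach N n (mult_gen x j k)"
    by auto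
  then show ?case
    using Suc.IH Suc.prems(2) valid_arrow_mult_gen by fastforce
qed simp

lemma reach_length: "y \<in> reach N n x \<Longrightarrow> length (snd y) \<le> length (snd x) + n"
proof (induction n arbitrary: x)
  case (Suc n)
  then obtain j k where "y \<in> reach N n (mult_gen x j k)"
    by auto
  then show ?case
    using Suc.IH length_mult_gen[of x j k] by fastforce
qed simp

lemma Ex_eq_sum_reach: "Ex N p n f x = (\<Sum>y\<in>reach N n x. Pn N p n x y * f y)"
proof (induction n arbitrary: x)
  case (Suc n)
  have "Ex N p n f (mult_gen x j k) = (\<Sum>y\<in>reach N (Suc n) x. Pn N p n (mult_gen x j k) y * f y)"
    if "(j, k) \<in> steps N (tgt x)" for j k
    unfolding Suc.IH
    by (rule sum.mono_neutral_left) (use that in \<open>auto simp: finite_reach Pn_outside_reach\<close>)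
  then have "Ex N p (Suc n) f x
      = (\<Sum>(j, k)\<in>steps N (tgt x). p (tgt x) j k * (\<Sum>y\<in>reach N (Suc n) x. Pn N p n (mult_gen x j k) y * f y))"
    by (auto intro!: sum.cong)
  also have "\<dots> = (\<Sum>y\<in>reach N (Suc n) x. Pn N p (Suc n) x y * f y)"
    by (simp add: Pn_Suc sum_distrib_left sum_distrib_right case_prod_beta mult.assoc) (rule sum.swap)
  finally show ?case .
qed simp

lemma Ex_unit_eq_sum_words:
  assumes "i \<in> {1..N}"
  shows "Ex N p n f (unit_arr i) = (\<Sum>d\<le>n. \<Sum>w\<in>words N i d. Pn N p n (unit_arr i) (i, w) * f (i, w))"
proof -
  let ?W = "\<Union>d\<le>n. words N i d"
  have valid: "valid_arrow N (unit_arr i)"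
    using assms by (simp add: valid_arrow_def valid_word_def unit_arr_def)
  have "Ex N p n f (unit_arr i) = (\<Sum>y\<in>Pair i ` ?W. Pn N p n (unit_arr i) y * f y)"
    unfolding Ex_eq_sum_reach
  proof (rule sum.mono_neutral_left)
    show "finite (Pair i ` ?W)"
      by (simp add: finite_words)
    show "reach N n (unit_arr i) \<subseteq> Pair i ` ?W"
    proof
      fix y
      assume y: "y \<in> reach N n (unit_arr i)"
      then have "valid_arrow N y" "fst y = i"
        using reach_valid_arrow[OF y valid] by (auto simp: unit_arr_def)
      moreover have "length (snd y) \<le> n"
        using reach_length[OF y] by (simp add: unit_arr_def)
      ultimately show "y \<in> Pair i ` ?W"
        by (intro image_eqI[of _ _ "snd y"]) (auto simp: words_def valid_arrow_def)
    qed
  qed (auto simp: Pn_outside_reach)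
  also have "\<dots> = (\<Sum>w\<in>?W. Pn N p n (unit_arr i) (i, w) * f (i, w))"
    by (subst sum.reindex) (auto simp: inj_on_def)
  also have "\<dots> = (\<Sum>d\<le>n. \<Sum>w\<in>words N i d. Pn N p n (unit_arr i) (i, w) * f (i, w))"
    by (rule sum.UNION_disjoint) (use finite_words in \<open>auto simp: words_def\<close>)
  finally show ?thesis .
qed

lemma Pn_unit_words_short:
  assumes "w \<in> words N i d" "n < d"
  shows "Pn N p n (unit_arr i) (i, w) = 0"
proof (rule Pn_outside_reach)
  show "(i, w) \<notin> reach N n (unit_arr i)"
    using assms reach_length[of "(i, w)" N n "unit_arr i"] by (auto simp: words_def unit_arr_def)
qed

lemma Ggf_eq_sum_words:
  assumes p_nonneg: "\<And>a j k. a \<in> {1..N} \<Longrightarrow> (j, k) \<in> steps N a \<Longrightarrow> 0 \<le> p a j k"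
    and i: "i \<in> {1..N}"
  shows "Ggf N p M i lam z
    = (\<Sum>d. \<Sum>w\<in>words N i d. ennreal (z powr arr_norm M (i, w)) * Sgf N p (unit_arr i) (i, w) lam)"
proof -
  define T where
    "T n d = (\<Sum>w\<in>words N i d. ennreal (Pn N p n (unit_arr i) (i, w)) * ennreal (z powr arr_norm M (i, w)))"
    for n d
  have valid: "valid_arrow N (unit_arr i)"
    using i by (simp add: valid_arrow_def valid_word_def unit_arr_def)
  have P: "0 \<le> Pn N p n (unit_arr i) y" for n y
    by (rule Pn_nonneg[OF p_nonneg valid])
  have "ennreal (Ex N p n (\<lambda>w. z powr arr_norm M w) (unit_arr i)) = (\<Sum>d. T n d)" for n
  proof -
    have "ennreal (Ex N p n (\<lambda>w. z powr arr_norm M w) (unit_arr i)) = (\<Sum>d\<le>n. T n d)"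
      unfolding Ex_unit_eq_sum_words[OF i] T_def
      by (subst sum_ennreal[symmetric], simp add: sum_nonneg P)
        (subst sum_ennreal[symmetric], simp add: P, simp add: ennreal_mult P)
    also have "\<dots> = (\<Sum>d. T n d)"
      by (rule suminf_finite[symmetric]) (auto simp: T_def Pn_unit_words_short)
    finally show ?thesis .
  qed
  then have "Ggf N p M i lam z = (\<Sum>n. \<Sum>d. T n d * ennreal lam ^ n)"
    by (simp add: Ggf_def)
  also have "\<dots> = (\<Sum>d. \<Sum>n. T n d * ennreal lam ^ n)"
    by (rule suminf_commute_ennreal)
  also have "\<dots> = (\<Sum>d. \<Sum>w\<in>words N i d. ennreal (z powr arr_norm M (i, w)) * Sgf N p (unit_arr i) (i, w) lam)"
    by (simp add: T_def Sgf_def sum_distrib_right suminf_sum[OF summableI])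
      (simp add: mult_ac flip: ennreal_suminf_cmult)
  finally show ?thesis .
qed

text \<open>The empty word counts for both signs, which is why \<^const>\<open>sbar\<close> repeats \<open>s\<close> in both halves.\<close>

definition signed_words :: "nat \<Rightarrow> nat \<Rightarrow> nat \<Rightarrow> int \<Rightarrow> (int \<times> nat) list set" where
  "signed_words N t d \<kappa> = {w \<in> words N t d. w = [] \<or> fst (hd w) = \<kappa>}"

lemma signed_words_0 [simp]: "signed_words N t 0 \<kappa> = {[]}"
  by (auto simp: signed_words_def)

lemma Cons_mem_words:
  "(k, j) # w \<in> words N t (Suc d) \<longleftrightarrow>
     j \<in> {1..N} \<and> j \<noteq> t \<and> k \<in> {-1, 1} \<and> w \<in> words N j d \<and> (w = [] \<or> fst (hd w) \<noteq> k)"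
  by (auto simp: words_def valid_word_def)

lemma hd_words_sign: "w \<in> words N t d \<Longrightarrow> w \<noteq> [] \<Longrightarrow> fst (hd w) \<in> {-1, 1}"
  by (cases w) (auto simp: words_def valid_word_def)

lemma words_Suc_eq_Un_signed_words:
  "words N t (Suc d) = signed_words N t (Suc d) 1 \<union> signed_words N t (Suc d) (-1)"
proof -
  have "w \<noteq> []" if "w \<in> words N t (Suc d)" for w
    using that by (auto simp: words_def)
  then show ?thesis
    using hd_words_sign[of _ N t "Suc d"] by (auto simp: signed_words_def)
qed

lemma signed_words_Suc:
  assumes "\<kappa> \<in> {-1, 1}"
  shows "signed_words N t (Suc d) \<kappa> = (\<Union>j\<in>{1..N} - {t}. (#) (\<kappa>, j) ` signed_words N j d (-\<kappa>))"
proof (rule set_eqI)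
  fix w
  show "w \<in> signed_words N t (Suc d) \<kappa> \<longleftrightarrow> w \<in> (\<Union>j\<in>{1..N} - {t}. (#) (\<kappa>, j) ` signed_words N j d (-\<kappa>))"
  proof (cases w)
    case Nil
    then show ?thesis
      by (auto simp: signed_words_def words_def)
  next
    case (Cons l w')
    obtain k j where l: "l = (k, j)"
      by (cases l)
    have "w' = [] \<or> fst (hd w') \<noteq> \<kappa> \<longleftrightarrow> w' = [] \<or> fst (hd w') = -\<kappa>" if "w' \<in> words N j d"
      using assms hd_words_sign[OF that] by (cases "w' = []") auto
    then show ?thesis
      using assms by (auto simp: Cons l signed_words_def Cons_mem_words image_iff)
  qed
qed

definition signed_word_sum ::
    "nat \<Rightarrow> (nat \<Rightarrow> nat \<Rightarrow> int \<Rightarrow> real) \<Rightarrow> (nat \<Rightarrow> nat \<Rightarrow> int \<Rightarrow> real) \<Rightarrow> real \<Rightarrow> real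
      \<Rightarrow> nat \<Rightarrow> nat \<Rightarrow> int \<Rightarrow> ennreal" where
  "signed_word_sum N p M lam z d t \<kappa> =
     (\<Sum>w\<in>signed_words N t d \<kappa>. ennreal (z powr arr_norm M (t, w)) * Sgf N p (unit_arr t) (t, w) lam)"

lemma finite_signed_words: "finite (signed_words N t d \<kappa>)"
  by (simp add: signed_words_def finite_words)

lemma signed_words_disjoint:
  "\<kappa> \<noteq> \<kappa>' \<Longrightarrow> signed_words N t (Suc d) \<kappa> \<inter> signed_words N t (Suc d) \<kappa>' = {}"
  by (auto simp: signed_words_def words_def)

lemma signed_word_sum_0:
  "z \<noteq> 0 \<Longrightarrow> signed_word_sum N p M lam z 0 t \<kappa> = Sgf N p (unit_arr t) (unit_arr t) lam"
  by (simp add: signed_word_sum_def arr_norm_def unit_arr_def)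

lemma signed_word_sum_Suc:
  assumes p_nonneg: "\<And>a j k. a \<in> {1..N} \<Longrightarrow> (j, k) \<in> steps N a \<Longrightarrow> 0 \<le> p a j k"
    and t: "t \<in> {1..N}" and \<kappa>: "\<kappa> \<in> {-1, 1}"
  shows "signed_word_sum N p M lam z (Suc d) t \<kappa> =
    (\<Sum>j\<in>{1..N} - {t}. ennreal (z powr M t j \<kappa>) * Rgf N p t j \<kappa> lam * signed_word_sum N p M lam z d j (-\<kappa>))"
proof -
  let ?term = "\<lambda>t w. ennreal (z powr arr_norm M (t, w)) * Sgf N p (unit_arr t) (t, w) lam"
  have term_Cons: "?term t ((\<kappa>, j) # w) = ennreal (z powr M t j \<kappa>) * Rgf N p t j \<kappa> lam * ?term j w"
    if j: "j \<in> {1..N} - {t}" and w: "w \<in> signed_words N j d (-\<kappa>)" for j w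
  proof -
    have step: "(j, \<kappa>) \<in> steps N t"
      using j \<kappa> by (auto simp: steps_iff)
    have w': "reduced_word j w" "w = [] \<or> fst (hd w) \<noteq> \<kappa>"
      using w \<kappa> by (auto simp: signed_words_def words_def valid_word_def)
    show ?thesis
      using Sgf_unit_Cons[OF p_nonneg t step w'] by (simp add: arr_norm_def powr_add ennreal_mult' mult_ac)
  qed
  have "signed_word_sum N p M lam z (Suc d) t \<kappa> = (\<Sum>j\<in>{1..N} - {t}. \<Sum>w\<in>(#) (\<kappa>, j) ` signed_words N j d (-\<kappa>). ?term t w)"
    unfolding signed_word_sum_def signed_words_Suc[OF \<kappa>]
    by (rule sum.UNION_disjoint) (auto simp: finite_signed_words)
  also have "\<dots> = (\<Sum>j\<in>{1..N} - {t}. \<Sum>w\<in>signed_words N j d (-\<kappa>). ?term t ((\<kappa>, j) # w))"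
    by (simp add: sum.reindex)
  also have "\<dots> = (\<Sum>j\<in>{1..N} - {t}. ennreal (z powr M t j \<kappa>) * Rgf N p t j \<kappa> lam * signed_word_sum N p M lam z d j (-\<kappa>))"
    unfolding signed_word_sum_def sum_distrib_left by (intro sum.cong refl term_Cons)
  finally show ?thesis .
qed

lemma signed_word_sum_Suc_both_signs:
  "signed_word_sum N p M lam z (Suc d) t 1 + signed_word_sum N p M lam z (Suc d) t (-1) =
     (\<Sum>w\<in>words N t (Suc d). ennreal (z powr arr_norm M (t, w)) * Sgf N p (unit_arr t) (t, w) lam)"
  unfolding signed_word_sum_def words_Suc_eq_Un_signed_words[of N t d]
  by (rule sum.union_disjoint[symmetric]) (simp_all add: finite_signed_words signed_words_disjoint)

section \<open>The transfer matrix\<close>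

lemma mat_pow_Suc_left:
  assumes "a \<in> {1..m}" "b \<in> {1..m}"
  shows "mat_pow m A (Suc d) a b = (\<Sum>c\<in>{1..m}. A a c * mat_pow m A d c b)"
  using assms
proof (induction d arbitrary: b)
  case 0
  then show ?case
    by (simp add: if_distrib[of "\<lambda>x. x * _"] if_distrib[of "\<lambda>x. _ * x"] cong: if_cong)
next
  case (Suc d)
  have "mat_pow m A (Suc (Suc d)) a b = (\<Sum>c\<in>{1..m}. (\<Sum>e\<in>{1..m}. A a e * mat_pow m A d e c) * A c b)"
    using Suc.IH assms(1) by simp
  also have "\<dots> = (\<Sum>e\<in>{1..m}. A a e * (\<Sum>c\<in>{1..m}. mat_pow m A d e c * A c b))"
    by (simp add: sum_distrib_left sum_distrib_right mult.assoc) (rule sum.swap)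
  finally show ?case
    by simp
qed

lemma sum_atLeastAtMost_double:
  fixes g :: "nat \<Rightarrow> 'a::comm_monoid_add"
  shows "(\<Sum>a\<in>{1..2*N}. g a) = (\<Sum>a\<in>{1..N}. g a) + (\<Sum>a\<in>{1..N}. g (a + N))"
proof -
  have "{1..2*N} = {1..N} \<union> {1+N..N+N}"
    by auto
  then have "(\<Sum>a\<in>{1..2*N}. g a) = (\<Sum>a\<in>{1..N}. g a) + (\<Sum>a\<in>{1+N..N+N}. g a)"
    by (simp add: sum.union_disjoint)
  also have "(\<Sum>a\<in>{1+N..N+N}. g a) = (\<Sum>a\<in>{1..N}. g (a + N))"
    by (rule sum.shift_bounds_cl_nat_ivl)
  finally show ?thesis .
qed

lemma sum_vbar:
  assumes "i \<in> {1..N}"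
  shows "(\<Sum>a\<in>{1..2*N}. vbar N i a * f a) = f i + f (i + N)"
proof -
  have "(\<Sum>a\<in>{1..N}. vbar N i a * f a) = f i" "(\<Sum>a\<in>{1..N}. vbar N i (a + N) * f (a + N)) = f (i + N)"
    using assms by (simp_all add: vbar_def if_distrib[of "\<lambda>x. x * _"] cong: if_cong)
  then show ?thesis
    unfolding sum_atLeastAtMost_double by simp
qed

lemma Kmat_blocks:
  assumes "a \<in> {1..N}" "c \<in> {1..N}"
  shows "Kmat N p M lam z a c = 0"
    and "Kmat N p M lam z a (c + N) = Bmat N p M 1 lam z a c"
    and "Kmat N p M lam z (a + N) c = Bmat N p M (-1) lam z a c"
    and "Kmat N p M lam z (a + N) (c + N) = 0"
  using assms by (simp_all add: Kmat_def)

lemma sum_Bmat_row: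
  "(\<Sum>j\<in>{1..N}. Bmat N p M \<kappa> lam z t j * f j)
     = (\<Sum>j\<in>{1..N} - {t}. ennreal (z powr M t j \<kappa>) * Rgf N p t j \<kappa> lam * f j)"
  unfolding Bmat_def by (rule sum.mono_neutral_cong_right) auto

definition K_pow_sbar ::
    "nat \<Rightarrow> (nat \<Rightarrow> nat \<Rightarrow> int \<Rightarrow> real) \<Rightarrow> (nat \<Rightarrow> nat \<Rightarrow> int \<Rightarrow> real) \<Rightarrow> real \<Rightarrow> real
      \<Rightarrow> nat \<Rightarrow> nat \<Rightarrow> ennreal" where
  "K_pow_sbar N p M lam z d a = (\<Sum>b\<in>{1..2*N}. mat_pow (2*N) (Kmat N p M lam z) d a b * sbar N p lam b)"

lemma K_pow_sbar_Suc:
  assumes "a \<in> {1..2*N}"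
  shows "K_pow_sbar N p M lam z (Suc d) a = (\<Sum>c\<in>{1..2*N}. Kmat N p M lam z a c * K_pow_sbar N p M lam z d c)"
proof -
  have "K_pow_sbar N p M lam z (Suc d) a
      = (\<Sum>b\<in>{1..2*N}. (\<Sum>c\<in>{1..2*N}. Kmat N p M lam z a c * mat_pow (2*N) (Kmat N p M lam z) d c b) * sbar N p lam b)"
    unfolding K_pow_sbar_def using mat_pow_Suc_left[OF assms] by (intro sum.cong) auto
  also have "\<dots> = (\<Sum>c\<in>{1..2*N}. Kmat N p M lam z a c * K_pow_sbar N p M lam z d c)"
    unfolding K_pow_sbar_def by (simp add: sum_distrib_left sum_distrib_right mult.assoc) (rule sum.swap)
  finally show ?thesis .
qed

lemma K_pow_sbar_eq_signed_word_sum: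
  assumes p_nonneg: "\<And>a j k. a \<in> {1..N} \<Longrightarrow> (j, k) \<in> steps N a \<Longrightarrow> 0 \<le> p a j k"
    and z: "z \<noteq> 0" and t: "t \<in> {1..N}"
  shows "K_pow_sbar N p M lam z d t = signed_word_sum N p M lam z d t 1
    \<and> K_pow_sbar N p M lam z d (t + N) = signed_word_sum N p M lam z d t (-1)"
  using t
proof (induction d arbitrary: t)
  case 0
  have "K_pow_sbar N p M lam z 0 a = sbar N p lam a" if "a \<in> {1..2*N}" for a
    using that by (simp add: K_pow_sbar_def if_distrib[of "\<lambda>x. x * _"] cong: if_cong)
  then show ?case
    using 0 z by (simp add: signed_word_sum_0 sbar_def)
next
  case (Suc d)
  have range: "t \<in> {1..2*N}" "t + N \<in> {1..2*N}"
    using Suc.prems by auto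
  have "K_pow_sbar N p M lam z (Suc d) t = (\<Sum>j\<in>{1..N}. Bmat N p M 1 lam z t j * K_pow_sbar N p M lam z d (j + N))"
    unfolding K_pow_sbar_Suc[OF range(1)] sum_atLeastAtMost_double
    by (simp add: Kmat_blocks[OF Suc.prems])
  also have "\<dots> = (\<Sum>j\<in>{1..N}. Bmat N p M 1 lam z t j * signed_word_sum N p M lam z d j (-1))"
    using Suc.IH by (intro sum.cong) auto
  also have "\<dots> = signed_word_sum N p M lam z (Suc d) t 1"
    unfolding sum_Bmat_row by (subst signed_word_sum_Suc[OF p_nonneg Suc.prems]) simp_all
  finally have upper: "K_pow_sbar N p M lam z (Suc d) t = signed_word_sum N p M lam z (Suc d) t 1" .
  have "K_pow_sbar N p M lam z (Suc d) (t + N) = (\<Sum>j\<in>{1..N}. Bmat N p M (-1) lam z t j * K_pow_sbar N p M lam z d j)"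
    unfolding K_pow_sbar_Suc[OF range(2)] sum_atLeastAtMost_double
    by (simp add: Kmat_blocks[OF Suc.prems])
  also have "\<dots> = (\<Sum>j\<in>{1..N}. Bmat N p M (-1) lam z t j * signed_word_sum N p M lam z d j 1)"
    using Suc.IH by (intro sum.cong) auto
  also have "\<dots> = signed_word_sum N p M lam z (Suc d) t (-1)"
    unfolding sum_Bmat_row by (subst signed_word_sum_Suc[OF p_nonneg Suc.prems]) simp_all
  finally show ?case
    using upper by simp
qed

theorem proposition5p9:
  fixes N :: nat
    and p M :: "nat \<Rightarrow> nat \<Rightarrow> int \<Rightarrow> real"
    and i :: nat
    and lam z :: real
  assumes "N \<ge> 3"
    and p_range: "\<And>a j k. a \<in> {1..N} \<Longrightarrow> (j, k) \<in> steps N a \<Longrightarrow> 0 < p a j k \<and> p a j k < 1"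
    and p_sum: "\<And>a. a \<in> {1..N} \<Longrightarrow> (\<Sum>(j, k)\<in>steps N a. p a j k) = 1"
    and M_nonneg: "\<And>a j k. a \<in> {1..N} \<Longrightarrow> (j, k) \<in> steps N a \<Longrightarrow> 0 \<le> M a j k"
    and "i \<in> {1..N}"
    and "0 \<le> lam"
    and "0 < z"
  shows "Ggf N p M i lam z =
           Sgf N p (unit_arr i) (unit_arr i) lam
           + (\<Sum>d. \<Sum>a\<in>{1..2*N}. \<Sum>b\<in>{1..2*N}.
                 vbar N i a * mat_pow (2*N) (Kmat N p M lam z) (Suc d) a b * sbar N p lam b)"
proof -
  have p_nonneg: "\<And>a j k. a \<in> {1..N} \<Longrightarrow> (j, k) \<in> steps N a \<Longrightarrow> 0 \<le> p a j k"
    using p_range by (meson less_imp_le)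
  have i: "i \<in> {1..N}" and z: "z \<noteq> 0"
    using assms by auto
  define T where
    "T d = (\<Sum>w\<in>words N i d. ennreal (z powr arr_norm M (i, w)) * Sgf N p (unit_arr i) (i, w) lam)" for d
  have T_Suc: "T (Suc d) = (\<Sum>a\<in>{1..2*N}. \<Sum>b\<in>{1..2*N}.
      vbar N i a * mat_pow (2*N) (Kmat N p M lam z) (Suc d) a b * sbar N p lam b)" for d
  proof -
    have "T (Suc d) = signed_word_sum N p M lam z (Suc d) i 1 + signed_word_sum N p M lam z (Suc d) i (-1)"
      by (simp add: T_def signed_word_sum_Suc_both_signs)
    also have "\<dots> = K_pow_sbar N p M lam z (Suc d) i + K_pow_sbar N p M lam z (Suc d) (i + N)"
      using K_pow_sbar_eq_signed_word_sum[OF p_nonneg z i] by simp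
    also have "\<dots> = (\<Sum>a\<in>{1..2*N}. vbar N i a * K_pow_sbar N p M lam z (Suc d) a)"
      by (rule sum_vbar[OF i, symmetric])
    finally show ?thesis
      by (simp add: K_pow_sbar_def sum_distrib_left mult.assoc del: mat_pow.simps)
  qed
  have T_0: "T 0 = Sgf N p (unit_arr i) (unit_arr i) lam"
    using z by (simp add: T_def arr_norm_def unit_arr_def)
  have "Ggf N p M i lam z = (\<Sum>d. T d)"
    using Ggf_eq_sum_words[OF p_nonneg i] by (simp add: T_def)
  also have "\<dots> = (\<Sum>d. T (d + 1)) + (\<Sum>d<1. T d)"
    by (rule suminf_offset[OF summableI])
  finally show ?thesis
    using T_0 T_Suc by (simp add: add.commute)
qed

end
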